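(* Let $p>1$ and $q>1$ be real numbers with $\frac1p+\frac1q=1$, and let $X,Y$ be nonnegative random variables on a common probability space with $\|X\|_p+\|Y\|_p+\|Y\|_q<\infty$. For nonnegative real numbers $A,B,C$ define $$\Delta_{p;A,B,C}(X,Y):=A+\mathbb{E}X^{p-1}Y-(\mathbb{E}X)^{p-1}\,\mathbb{E}Y-\big(B+\mathbb{E}X^p-(\mathbb{E}X)^p\big)^{1/q}\big(C+\mathbb{E}Y^p-(\mathbb{E}Y)^p\big)^{1/p},$$ and let $\Delta_p(X,Y):=\Delta_{p;0,0,0}(X,Y)$. If the nonnegative real numbers $A,B,C$ satisfy $A\le B^{1/q}C^{1/p}$, then $\Delta_{p;A,B,C}(X,Y)\le\Delta_p(X,Y)$.
   Context: $\|X\|_r:=(\mathbb{E}|X|^r)^{1/r}$. Note $\mathbb{E}X^p-(\mathbb{E}X)^p\ge0$ and $\mathbb{E}Y^p-(\mathbb{E}Y)^p\ge0$ by Lyapunov's inequality, so the expression is well defined. *)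

theory Defs
  imports "HOL-Probability.Probability"
begin

definition Delta :: "real \<Rightarrow> real \<Rightarrow> real \<Rightarrow> real \<Rightarrow> real \<Rightarrow> 'a measure \<Rightarrow> ('a \<Rightarrow> real) \<Rightarrow> ('a \<Rightarrow> real) \<Rightarrow> real" where
  "Delta p q A B C M X Y =
     A + (\<integral>\<omega>. X \<omega> powr (p - 1) * Y \<omega> \<partial>M) - (\<integral>\<omega>. X \<omega> \<partial>M) powr (p - 1) * (\<integral>\<omega>. Y \<omega> \<partial>M)
     - (B + (\<integral>\<omega>. X \<omega> powr p \<partial>M) - (\<integral>\<omega>. X \<omega> \<partial>M) powr p) powr (1 / q)
       * (C + (\<integral>\<omega>. Y \<omega> powr p \<partial>M) - (\<integral>\<omega>. Y \<omega> \<partial>M) powr p) powr (1 / p)"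

end

theory Submission
  imports Defs
begin

text \<open>
  Both variance-like quantities \<open>E X\<^sup>p - (E X)\<^sup>p\<close> and \<open>E Y\<^sup>p - (E Y)\<^sup>p\<close> are nonnegative
  by Jensen's inequality, obtained here by integrating a tangent line of \<open>x \<mapsto> x\<^sup>p\<close>.
  The claim then reduces to the superadditivity of the weighted geometric mean
  \<open>(a, b) \<mapsto> a\<^bsup>1/q\<^esup> b\<^bsup>1/p\<^esup>\<close>: it is concave and positively homogeneous of degree one,
  so adding \<open>(B, C)\<close> raises it by at least \<open>B\<^bsup>1/q\<^esup> C\<^bsup>1/p\<^esup> \<ge> A\<close>.
\<close>

lemma Youngs_inequality_0_nonneg:
  fixes a b \<alpha> \<beta> :: real
  assumes "0 \<le> \<alpha>" "0 \<le> \<beta>" "\<alpha> + \<beta> = 1" "0 \<le> a" "0 \<le> b"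
  shows "a powr \<alpha> * b powr \<beta> \<le> \<alpha> * a + \<beta> * b"
proof (cases "a = 0 \<or> b = 0")
  case True
  then show ?thesis using assms by auto
next
  case False
  then show ?thesis using Youngs_inequality_0[of \<alpha> \<beta> a b] assms by auto
qed

lemma geometric_mean_superadditive:
  fixes a b c d \<alpha> \<beta> :: real
  assumes "0 \<le> \<alpha>" "0 \<le> \<beta>" "\<alpha> + \<beta> = 1"
    and "0 \<le> a" "0 \<le> b" "0 \<le> c" "0 \<le> d"
  shows "a powr \<alpha> * b powr \<beta> + c powr \<alpha> * d powr \<beta> \<le> (a + c) powr \<alpha> * (b + d) powr \<beta>"
proof (cases "a + c = 0 \<or> b + d = 0")
  case True
  then have "(a = 0 \<and> c = 0) \<or> (b = 0 \<and> d = 0)" using assms by linarith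
  then show ?thesis by auto
next
  case False
  define S T where "S = a + c" and "T = b + d"
  have "S > 0" "T > 0" using False assms by (auto simp: S_def T_def)
  have term_le: "x powr \<alpha> * y powr \<beta> \<le> S powr \<alpha> * T powr \<beta> * (\<alpha> * (x / S) + \<beta> * (y / T))"
    if "0 \<le> x" "0 \<le> y" for x y
  proof -
    have "x powr \<alpha> * y powr \<beta> = S powr \<alpha> * T powr \<beta> * ((x / S) powr \<alpha> * (y / T) powr \<beta>)"
      using \<open>S > 0\<close> \<open>T > 0\<close> that by (simp add: powr_divide)
    also have "\<dots> \<le> S powr \<alpha> * T powr \<beta> * (\<alpha> * (x / S) + \<beta> * (y / T))"
      using \<open>S > 0\<close> \<open>T > 0\<close> that assms
      by (intro mult_left_mono Youngs_inequality_0_nonneg) auto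
    finally show ?thesis .
  qed
  have "a powr \<alpha> * b powr \<beta> + c powr \<alpha> * d powr \<beta>
      \<le> S powr \<alpha> * T powr \<beta> * (\<alpha> * ((a + c) / S) + \<beta> * ((b + d) / T))"
    using term_le[of a b] term_le[of c d] assms by (simp add: algebra_simps add_divide_distrib)
  also have "\<dots> = S powr \<alpha> * T powr \<beta>"
    using \<open>S > 0\<close> \<open>T > 0\<close> assms by (simp add: S_def T_def)
  finally show ?thesis by (simp add: S_def T_def)
qed

lemma powr_above_tangent:
  fixes p c x :: real
  assumes "1 \<le> p" "0 < c" "0 \<le> x"
  shows "c powr p + p * c powr (p - 1) * (x - c) \<le> x powr p"
proof (cases "x = 0")
  case True
  have "c * c powr (p - 1) = c powr p"
    using \<open>0 < c\<close> by (simp add: powr_diff)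
  moreover have "c powr p \<le> p * c powr p"
    using \<open>1 \<le> p\<close> by (simp add: mult_le_cancel_right1)
  ultimately show ?thesis using True by (simp add: algebra_simps)
next
  case False
  have "p * c powr (p - 1) * (x - c) \<le> x powr p - c powr p"
    using assms False
    by (intro convex_on_imp_above_tangent[OF powr_convex[OF \<open>1 \<le> p\<close>]] derivative_eq_intros) (auto simp: interior_open)
  then show ?thesis by simp
qed

lemma (in prob_space) powr_expectation_le:
  fixes X :: "'a \<Rightarrow> real" and p :: real
  assumes "1 \<le> p" and nonneg: "AE x in M. 0 \<le> X x"
    and "integrable M (\<lambda>x. X x powr p)"
  shows "expectation X powr p \<le> expectation (\<lambda>x. X x powr p)"
proof -
  have "0 \<le> expectation (\<lambda>x. X x powr p)"
    by (intro integral_nonneg_AE) simp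
  moreover have "expectation X powr p \<le> expectation (\<lambda>x. X x powr p)"
    if "integrable M X" "0 < expectation X"
  proof -
    let ?m = "expectation X"
    have "?m powr p = expectation (\<lambda>x. ?m powr p + p * ?m powr (p - 1) * (X x - ?m))"
      using \<open>integrable M X\<close> by (simp add: prob_space)
    also have "\<dots> \<le> expectation (\<lambda>x. X x powr p)"
      using that nonneg assms by (intro integral_mono_AE) (auto intro: powr_above_tangent)
    finally show ?thesis .
  qed
  moreover have "0 \<le> expectation X"
    using nonneg by (rule integral_nonneg_AE)
  ultimately show ?thesis
    by (cases "integrable M X \<and> 0 < expectation X") (auto simp: not_integrable_integral_eq)
qed

theorem lemma1:
  fixes M :: "'a measure" and X Y :: "'a \<Rightarrow> real" and p q A B C :: real
  assumes "prob_space M"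
    and "p > 1" and "q > 1" and "1 / p + 1 / q = 1"
    and "X \<in> borel_measurable M" and "Y \<in> borel_measurable M"
    and "\<forall>\<omega>\<in>space M. X \<omega> \<ge> 0" and "\<forall>\<omega>\<in>space M. Y \<omega> \<ge> 0"
    and "integrable M (\<lambda>\<omega>. X \<omega> powr p)"
    and "integrable M (\<lambda>\<omega>. Y \<omega> powr p)"
    and "integrable M (\<lambda>\<omega>. Y \<omega> powr q)"
    and "A \<ge> 0" and "B \<ge> 0" and "C \<ge> 0"
    and "A \<le> B powr (1 / q) * C powr (1 / p)"
  shows "Delta p q A B C M X Y \<le> Delta p q 0 0 0 M X Y"
proof -
  interpret prob_space M by fact
  let ?u = "expectation (\<lambda>\<omega>. X \<omega> powr p) - expectation X powr p"
  let ?v = "expectation (\<lambda>\<omega>. Y \<omega> powr p) - expectation Y powr p"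
  have "0 \<le> ?u" "0 \<le> ?v"
    using assms powr_expectation_le[of p X] powr_expectation_le[of p Y] by (auto intro: AE_I2)
  then have "B powr (1 / q) * C powr (1 / p) + ?u powr (1 / q) * ?v powr (1 / p)
      \<le> (B + ?u) powr (1 / q) * (C + ?v) powr (1 / p)"
    using assms by (intro geometric_mean_superadditive) (auto simp: add.commute)
  then show ?thesis
    using \<open>A \<le> B powr (1 / q) * C powr (1 / p)\<close> unfolding Delta_def add_diff_eq by simp
qed

end
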